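(* Let $n\ge 2$ and let $P$ be an $n\times n$ permutation matrix which is the leaf matrix of exactly one CNM of size $n$. Then $P$ has no nonzero entry on the main diagonal, i.e. $P_{i,i}=0$ for all $i$.
   Context: A complete non-ambiguous matrix (CNM) of size $n$ is an $n\times n$ matrix $M=(m_{i,j})$ with entries in $\{0,1\}$ whose support $T=\{(i,j): m_{i,j}=1\}$ (whose elements are called vertices) satisfies: (1) $(1,1)\in T$; (2) for every $p=(i,j)\in T$ with $p\neq(1,1)$, exactly one of the following holds: there is $(i',j)\in T$ with $i'<i$, or there is $(i,j')\in T$ with $j'<j$; (3) every row and every column of $M$ contains at least one vertex; (4) define the parent of $p=(i,j)\neq(1,1)$ to be $(i',j)$ with $i'<i$ maximal if such a vertex exists, and otherwise $(i,j')$ with $j'<j$ maximal; then every vertex is the parent of either zero or exactly two vertices. A vertex with no children is a leaf. The leaf matrix $p(M)$ is obtained from $M$ by replacing all non-leaf vertices by $0$ (it is a permutation matrix). A permutation matrix $P$ is "the leaf matrix of exactly one CNM" if there is exactly one CNM $M$ with $p(M)=P$. *)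

theory Defs
  imports Main
begin

text \<open>An n x n 0/1 matrix is represented by its support: a set of positions (i,j)
  with 1 \<le> i,j \<le> n (1-based indices).\<close>

type_synonym pos = "nat \<times> nat"

definition parent :: "pos set \<Rightarrow> pos \<Rightarrow> pos" where
  "parent T p = (case p of (i, j) \<Rightarrow>
     if (\<exists>i'<i. (i', j) \<in> T) then (Max {i'. i' < i \<and> (i', j) \<in> T}, j)
     else (i, Max {j'. j' < j \<and> (i, j') \<in> T}))"

definition children :: "pos set \<Rightarrow> pos \<Rightarrow> pos set" where
  "children T p = {q \<in> T. q \<noteq> (1, 1) \<and> parent T q = p}"

definition is_CNM :: "nat \<Rightarrow> pos set \<Rightarrow> bool" where
  "is_CNM n T \<longleftrightarrow>
     T \<subseteq> {1..n} \<times> {1..n} \<and>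
     (1, 1) \<in> T \<and>
     (\<forall>(i, j) \<in> T. (i, j) \<noteq> (1, 1) \<longrightarrow>
        ((\<exists>i'<i. (i', j) \<in> T) \<noteq> (\<exists>j'<j. (i, j') \<in> T))) \<and>
     (\<forall>i \<in> {1..n}. \<exists>j. (i, j) \<in> T) \<and>
     (\<forall>j \<in> {1..n}. \<exists>i. (i, j) \<in> T) \<and>
     (\<forall>p \<in> T. card (children T p) = 0 \<or> card (children T p) = 2)"

definition leaf_matrix :: "pos set \<Rightarrow> pos set" where
  "leaf_matrix T = {p \<in> T. children T p = {}}"

definition is_perm_matrix :: "nat \<Rightarrow> pos set \<Rightarrow> bool" where
  "is_perm_matrix n P \<longleftrightarrow>
     P \<subseteq> {1..n} \<times> {1..n} \<and>
     (\<forall>i \<in> {1..n}. \<exists>!j. (i, j) \<in> P) \<and>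
     (\<forall>j \<in> {1..n}. \<exists>!i. (i, j) \<in> P)"

end

theory Submission
  imports Defs
begin

text \<open>
  The children of a vertex are its nearest vertex to the right and its nearest vertex below, so
  condition (4) says that a vertex has a vertex to its right iff it has one below it, and the
  leaves are the vertices with neither. Let \<open>(i, i)\<close> be a leaf; up to transposition its parent
  \<open>(a, i)\<close> lies above it. Since the last vertices of distinct rows lie in distinct columns, a
  counting argument over the rows below \<open>i\<close> produces a vertex strictly below and to the left of
  \<open>(i, i)\<close>. Let \<open>R\<close> be \<open>a\<close> if \<open>(a, i)\<close> has a vertex above it and \<open>i\<close> otherwise; row \<open>R\<close> has no
  vertex left of column \<open>i\<close>, and some column \<open>c < i\<close> has vertices both above and below row \<open>R\<close>.
  Moving the vertex \<open>(a, i)\<close> to \<open>(R, c)\<close> yields a different CNM with the same leaves.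
\<close>

section \<open>Neighbours, children and leaves\<close>

definition has_above :: "pos set \<Rightarrow> nat \<Rightarrow> nat \<Rightarrow> bool" where
  "has_above T i j \<longleftrightarrow> (\<exists>i'<i. (i', j) \<in> T)"

definition has_below :: "pos set \<Rightarrow> nat \<Rightarrow> nat \<Rightarrow> bool" where
  "has_below T i j \<longleftrightarrow> (\<exists>i'>i. (i', j) \<in> T)"

definition has_left :: "pos set \<Rightarrow> nat \<Rightarrow> nat \<Rightarrow> bool" where
  "has_left T i j \<longleftrightarrow> (\<exists>j'<j. (i, j') \<in> T)"

definition has_right :: "pos set \<Rightarrow> nat \<Rightarrow> nat \<Rightarrow> bool" where
  "has_right T i j \<longleftrightarrow> (\<exists>j'>j. (i, j') \<in> T)"

definition non_ambiguous :: "pos set \<Rightarrow> bool" where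
  "non_ambiguous T \<longleftrightarrow>
     (\<forall>(i, j) \<in> T. (i, j) \<noteq> (1, 1) \<longrightarrow> has_above T i j \<noteq> has_left T i j)"

lemma non_ambiguousD:
  "non_ambiguous T \<Longrightarrow> (i, j) \<in> T \<Longrightarrow> (i, j) \<noteq> (1, 1) \<Longrightarrow> has_above T i j \<longleftrightarrow> \<not> has_left T i j"
  unfolding non_ambiguous_def by blast

lemma finite_less_Collect: "finite {x::nat. x < i \<and> P x}"
  by (rule finite_subset[of _ "{..<i}"]) auto

lemma Max_less_Collect_eqI:
  assumes "m < i" "P m" "\<And>k. m < k \<Longrightarrow> k < i \<Longrightarrow> \<not> P k"
  shows "Max {x::nat. x < i \<and> P x} = m"
  by (rule Max_eqI[OF finite_less_Collect]) (use assms not_less in blast)+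

lemma Max_less_Collect_gap:
  assumes "\<exists>x<i. P x"
  defines "m \<equiv> Max {x::nat. x < i \<and> P x}"
  shows "m < i" "P m" "\<And>k. m < k \<Longrightarrow> k < i \<Longrightarrow> \<not> P k"
proof -
  have "m \<in> {x. x < i \<and> P x}"
    unfolding m_def by (rule Max_in[OF finite_less_Collect]) (use assms in blast)
  then show "m < i" "P m" by auto
  show "\<not> P k" if "m < k" "k < i" for k
    using Max_ge[OF finite_less_Collect, of k i P] that unfolding m_def by fastforce
qed

definition first_after :: "(nat \<Rightarrow> bool) \<Rightarrow> nat \<Rightarrow> nat set" where
  "first_after P j = {m. j < m \<and> P m \<and> (\<forall>k. j < k \<and> k < m \<longrightarrow> \<not> P k)}"

lemma first_after_eq:
  "first_after P j = (if \<exists>m>j. P m then {LEAST m. j < m \<and> P m} else {})"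
proof (cases "\<exists>m>j. P m")
  case True
  define m where "m = (LEAST m. j < m \<and> P m)"
  have m: "j < m \<and> P m" and least: "\<And>k. j < k \<and> P k \<Longrightarrow> m \<le> k"
    unfolding m_def using LeastI_ex[OF True] by (auto intro: Least_le)
  have "first_after P j = {m}"
    unfolding first_after_def using m least by safe (meson antisym not_le, meson not_le)
  then show ?thesis using True unfolding m_def by simp
next
  case False
  then have "first_after P j = {}" unfolding first_after_def by blast
  then show ?thesis by (simp only: if_not_P[OF False])
qed

lemma parent_if_has_above:
  "has_above T x y \<Longrightarrow> parent T (x, y) = (Max {i'. i' < x \<and> (i', y) \<in> T}, y)"
  unfolding parent_def has_above_def by auto

lemma parent_if_not_has_above:
  "\<not> has_above T x y \<Longrightarrow> parent T (x, y) = (x, Max {j'. j' < y \<and> (x, j') \<in> T})"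
  unfolding parent_def has_above_def by auto

lemma children_eq:
  assumes na: "non_ambiguous T" and ij: "(i, j) \<in> T" "0 < i" "0 < j"
  shows "children T (i, j) =
    Pair i ` first_after (\<lambda>m. (i, m) \<in> T) j \<union> (\<lambda>m. (m, j)) ` first_after (\<lambda>m. (m, j) \<in> T) i"
proof (intro set_eqI iffI)
  fix q assume "q \<in> children T (i, j)"
  moreover obtain x y where q: "q = (x, y)" by fastforce
  ultimately have xy: "(x, y) \<in> T" "(x, y) \<noteq> (1, 1)" and par: "parent T (x, y) = (i, j)"
    by (auto simp: children_def)
  show "q \<in> Pair i ` first_after (\<lambda>m. (i, m) \<in> T) j \<union> (\<lambda>m. (m, j)) ` first_after (\<lambda>m. (m, j) \<in> T) i"
  proof (cases "has_above T x y")
    case True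
    then have "Max {i'. i' < x \<and> (i', y) \<in> T} = i" "y = j"
      using par parent_if_has_above by auto
    moreover note gap = Max_less_Collect_gap[of x "\<lambda>i'. (i', y) \<in> T"]
    ultimately have "i < x" "\<forall>k. i < k \<and> k < x \<longrightarrow> (k, j) \<notin> T"
      using True unfolding has_above_def by metis+
    then show ?thesis using xy \<open>y = j\<close> unfolding q first_after_def by blast
  next
    case False
    then have "Max {j'. j' < y \<and> (x, j') \<in> T} = j" "x = i"
      using par parent_if_not_has_above by auto
    moreover have "\<exists>j'<y. (x, j') \<in> T"
      using non_ambiguousD[OF na xy] False unfolding has_left_def by simp
    moreover note gap = Max_less_Collect_gap[of y "\<lambda>j'. (x, j') \<in> T"]
    ultimately have "j < y" "\<forall>k. j < k \<and> k < y \<longrightarrow> (i, k) \<notin> T"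
      by metis+
    then show ?thesis using xy \<open>x = i\<close> unfolding q first_after_def by blast
  qed
next
  fix q
  assume "q \<in> Pair i ` first_after (\<lambda>m. (i, m) \<in> T) j \<union> (\<lambda>m. (m, j)) ` first_after (\<lambda>m. (m, j) \<in> T) i"
  then consider (right) y where "q = (i, y)" "j < y" "(i, y) \<in> T" "\<forall>k. j < k \<and> k < y \<longrightarrow> (i, k) \<notin> T"
    | (below) x where "q = (x, j)" "i < x" "(x, j) \<in> T" "\<forall>k. i < k \<and> k < x \<longrightarrow> (k, j) \<notin> T"
    unfolding first_after_def by blast
  then show "q \<in> children T (i, j)"
  proof cases
    case right
    have "has_left T i y" using right ij unfolding has_left_def by blast
    moreover have "(i, y) \<noteq> (1, 1)" using right ij by auto
    ultimately have "\<not> has_above T i y" using non_ambiguousD[OF na] right by blast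
    moreover have "Max {j'. j' < y \<and> (i, j') \<in> T} = j"
      using right ij by (intro Max_less_Collect_eqI) auto
    ultimately show ?thesis using right parent_if_not_has_above \<open>(i, y) \<noteq> (1, 1)\<close>
      by (auto simp: children_def)
  next
    case below
    have "has_above T x j" using below ij unfolding has_above_def by blast
    moreover have "Max {i'. i' < x \<and> (i', j) \<in> T} = i"
      using below ij by (intro Max_less_Collect_eqI) auto
    ultimately show ?thesis using below parent_if_has_above ij by (auto simp: children_def)
  qed
qed

lemma card_children:
  assumes "non_ambiguous T" "(i, j) \<in> T" "0 < i" "0 < j"
  shows "card (children T (i, j)) =
    (if has_right T i j then 1 else 0) + (if has_below T i j then 1 else 0)"
proof -
  have R: "first_after (\<lambda>m. (i, m) \<in> T) j =
      (if has_right T i j then {LEAST m. j < m \<and> (i, m) \<in> T} else {})"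
    unfolding first_after_eq has_right_def ..
  have B: "first_after (\<lambda>m. (m, j) \<in> T) i =
      (if has_below T i j then {LEAST m. i < m \<and> (m, j) \<in> T} else {})"
    unfolding first_after_eq has_below_def ..
  have "finite (first_after (\<lambda>m. (i, m) \<in> T) j)" "finite (first_after (\<lambda>m. (m, j) \<in> T) i)"
    unfolding R B by simp_all
  moreover have "Pair i ` first_after (\<lambda>m. (i, m) \<in> T) j \<inter> (\<lambda>m. (m, j)) ` first_after (\<lambda>m. (m, j) \<in> T) i = {}"
    unfolding first_after_def by auto
  ultimately have "card (children T (i, j)) =
      card (first_after (\<lambda>m. (i, m) \<in> T) j) + card (first_after (\<lambda>m. (m, j) \<in> T) i)"
    unfolding children_eq[OF assms] by (simp add: card_Un_disjoint card_image inj_on_def)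
  then show ?thesis unfolding R B by simp
qed

lemma is_CNM_iff:
  "is_CNM n T \<longleftrightarrow>
     T \<subseteq> {1..n} \<times> {1..n} \<and> (1, 1) \<in> T \<and> non_ambiguous T \<and>
     (\<forall>i \<in> {1..n}. \<exists>j. (i, j) \<in> T) \<and> (\<forall>j \<in> {1..n}. \<exists>i. (i, j) \<in> T) \<and>
     (\<forall>(i, j) \<in> T. has_right T i j \<longleftrightarrow> has_below T i j)"
proof -
  have card_eq: "(\<forall>p \<in> T. card (children T p) = 0 \<or> card (children T p) = 2) \<longleftrightarrow>
      (\<forall>(i, j) \<in> T. has_right T i j \<longleftrightarrow> has_below T i j)"
    if "T \<subseteq> {1..n} \<times> {1..n}" "non_ambiguous T"
  proof -
    have "card (children T (i, j)) = 0 \<or> card (children T (i, j)) = 2 \<longleftrightarrow>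
        (has_right T i j \<longleftrightarrow> has_below T i j)" if "(i, j) \<in> T" for i j
    proof -
      have "0 < i" "0 < j" using that \<open>T \<subseteq> _\<close> by auto
      then show ?thesis using card_children[OF \<open>non_ambiguous T\<close> that] by auto
    qed
    then show ?thesis unfolding Ball_def split_paired_All prod.case by meson
  qed
  moreover have na_eq: "(\<forall>(i, j) \<in> T. (i, j) \<noteq> (1, 1) \<longrightarrow>
        ((\<exists>i'<i. (i', j) \<in> T) \<noteq> (\<exists>j'<j. (i, j') \<in> T))) \<longleftrightarrow> non_ambiguous T"
    unfolding non_ambiguous_def has_above_def has_left_def ..
  ultimately show ?thesis unfolding is_CNM_def na_eq by (simp only: card_eq cong: conj_cong)
qed

lemma is_CNMD:
  assumes "is_CNM n T"
  shows is_CNM_subset: "T \<subseteq> {1..n} \<times> {1..n}"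
    and is_CNM_root: "(1, 1) \<in> T"
    and is_CNM_non_ambiguous: "non_ambiguous T"
    and is_CNM_rows: "i \<in> {1..n} \<Longrightarrow> \<exists>j. (i, j) \<in> T"
    and is_CNM_cols: "j \<in> {1..n} \<Longrightarrow> \<exists>i. (i, j) \<in> T"
    and is_CNM_has_right_iff: "(i, j) \<in> T \<Longrightarrow> has_right T i j \<longleftrightarrow> has_below T i j"
  using assms unfolding is_CNM_iff by blast+

lemma leaf_matrix_eq:
  assumes "is_CNM n T"
  shows "leaf_matrix T = {(i, j) \<in> T. \<not> has_right T i j \<and> \<not> has_below T i j}"
proof -
  note box = is_CNM_subset[OF assms] and na = is_CNM_non_ambiguous[OF assms]
  have "finite T" using box by (rule finite_subset) simp
  then have "finite (children T p)" for p
    by (rule rev_finite_subset) (auto simp: children_def)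
  then have "children T (i, j) = {} \<longleftrightarrow> \<not> has_right T i j \<and> \<not> has_below T i j"
    if "(i, j) \<in> T" for i j
  proof -
    have "0 < i" "0 < j" using that box by auto
    then show ?thesis using card_children[OF na that] \<open>finite (children T (i, j))\<close>
      by (auto simp flip: card_0_eq)
  qed
  then show ?thesis unfolding leaf_matrix_def by auto
qed

section \<open>Transposition\<close>

lemma swap_image_mem [simp]: "(i, j) \<in> prod.swap ` T \<longleftrightarrow> (j, i) \<in> T"
  by force

lemma has_above_swap [simp]: "has_above (prod.swap ` T) i j \<longleftrightarrow> has_left T j i"
  and has_left_swap [simp]: "has_left (prod.swap ` T) i j \<longleftrightarrow> has_above T j i"
  and has_below_swap [simp]: "has_below (prod.swap ` T) i j \<longleftrightarrow> has_right T j i"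
  and has_right_swap [simp]: "has_right (prod.swap ` T) i j \<longleftrightarrow> has_below T j i"
  unfolding has_above_def has_left_def has_below_def has_right_def by simp_all

lemma non_ambiguous_swap:
  assumes "non_ambiguous T"
  shows "non_ambiguous (prod.swap ` T)"
  unfolding non_ambiguous_def Ball_def split_paired_All prod.case
  using non_ambiguousD[OF assms] by auto

lemma is_CNM_swap:
  assumes "is_CNM n T"
  shows "is_CNM n (prod.swap ` T)"
proof -
  have box: "T \<subseteq> {1..n} \<times> {1..n}" and root: "(1, 1) \<in> T" and na: "non_ambiguous T"
    and rows: "\<forall>i\<in>{1..n}. \<exists>j. (i, j) \<in> T" and cols: "\<forall>j\<in>{1..n}. \<exists>i. (i, j) \<in> T"
    and right_below: "\<forall>(i, j) \<in> T. has_right T i j \<longleftrightarrow> has_below T i j"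
    using assms unfolding is_CNM_iff by blast+
  have "prod.swap ` T \<subseteq> {1..n} \<times> {1..n}" using box by auto
  moreover have "\<forall>(i, j) \<in> prod.swap ` T. has_right (prod.swap ` T) i j \<longleftrightarrow> has_below (prod.swap ` T) i j"
    using right_below by auto
  ultimately show ?thesis
    unfolding is_CNM_iff using root non_ambiguous_swap[OF na] rows cols by auto
qed

lemma leaf_matrix_swap:
  assumes "is_CNM n T"
  shows "leaf_matrix (prod.swap ` T) = prod.swap ` leaf_matrix T"
  unfolding leaf_matrix_eq[OF assms] leaf_matrix_eq[OF is_CNM_swap[OF assms]] by auto

section \<open>Vertices forced near a diagonal leaf\<close>

lemma root_not_leaf:
  assumes "is_CNM n T" "2 \<le> n"
  shows "(1, 1) \<notin> leaf_matrix T"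
proof -
  note na = is_CNM_non_ambiguous[OF assms(1)]
  have "2 \<in> {1..n}" using assms(2) by simp
  then obtain x where "(x, 2) \<in> T" using is_CNM_cols[OF assms(1)] by blast
  then have "(x, 2) \<in> T \<and> (x, 2::nat) \<noteq> (1, 1)" by simp
  from ex_has_least_nat[where P = "\<lambda>q. q \<in> T \<and> q \<noteq> (1, 1)" and m = "\<lambda>q. fst q + snd q", OF this]
  obtain u v where uv: "(u, v) \<in> T" "(u, v) \<noteq> (1, 1)"
    and least: "\<And>q. q \<in> T \<Longrightarrow> q \<noteq> (1, 1) \<Longrightarrow> u + v \<le> fst q + snd q"
    by fastforce
  have "has_below T 1 1 \<or> has_right T 1 1"
  proof (cases "has_above T u v")
    case True
    then obtain x' where "x' < u" "(x', v) \<in> T" unfolding has_above_def by blast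
    with least[of "(x', v)"] uv show ?thesis unfolding has_below_def by fastforce
  next
    case False
    then obtain y' where "y' < v" "(u, y') \<in> T"
      using non_ambiguousD[OF na uv] unfolding has_left_def by blast
    with least[of "(u, y')"] uv show ?thesis unfolding has_right_def by fastforce
  qed
  then show ?thesis using leaf_matrix_eq[OF assms(1)] by auto
qed

definition last_in_row :: "pos set \<Rightarrow> nat \<Rightarrow> nat" where
  "last_in_row T r = Max {y. (r, y) \<in> T}"

context
  fixes n :: nat and T :: "pos set"
  assumes cnm: "is_CNM n T"
begin

private lemma finite_row: "finite {y. (r, y) \<in> T}"
proof -
  have "{y. (r, y) \<in> T} \<subseteq> {1..n}" using is_CNM_subset[OF cnm] by blast
  then show ?thesis by (rule finite_subset) simp
qed

lemma le_last_in_row: "(r, y) \<in> T \<Longrightarrow> y \<le> last_in_row T r"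
  unfolding last_in_row_def by (rule Max_ge[OF finite_row]) simp

lemma last_in_row_mem:
  assumes "r \<in> {1..n}"
  shows "(r, last_in_row T r) \<in> T"
proof -
  have "{y. (r, y) \<in> T} \<noteq> {}" using is_CNM_rows[OF cnm assms] by blast
  from Max_in[OF finite_row this] show ?thesis unfolding last_in_row_def by simp
qed

lemma not_has_below_last_in_row:
  assumes "r \<in> {1..n}"
  shows "\<not> has_below T r (last_in_row T r)"
proof -
  have "\<not> has_right T r (last_in_row T r)"
    unfolding has_right_def using le_last_in_row by (meson not_le)
  then show ?thesis using is_CNM_has_right_iff[OF cnm last_in_row_mem[OF assms]] by blast
qed

lemma inj_on_last_in_row: "inj_on (last_in_row T) {1..n}"
proof (rule linorder_inj_onI')
  fix r r' assume "r \<in> {1..n}" "r' \<in> {1..n}" "r < r'"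
  then show "last_in_row T r \<noteq> last_in_row T r'"
    using last_in_row_mem[of r'] not_has_below_last_in_row[of r] unfolding has_below_def by auto
qed

end

text \<open>Otherwise the last columns of the rows below \<open>i\<close> would exhaust the columns right of \<open>i\<close>,
  leaving none for the row of the vertex above \<open>(i, i)\<close>, whose last column is also right of \<open>i\<close>.\<close>
lemma diagonal_leaf_has_vertex_below_left:
  assumes cnm: "is_CNM n T" and "(i, i) \<in> T" and no_below: "\<not> has_below T i i"
    and "has_above T i i"
  shows "\<exists>r c. (r, c) \<in> T \<and> i < r \<and> c < i"
proof (rule ccontr)
  assume "\<not> ?thesis"
  then have right_of_i: "i \<le> c" if "(r, c) \<in> T" "i < r" for r c
    using that by (meson not_le)
  note box = is_CNM_subset[OF cnm]
  let ?f = "last_in_row T"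
  have "?f r \<in> {i<..n}" if "r \<in> {i<..n}" for r
  proof -
    have r: "r \<in> {1..n}" using that by auto
    have "(r, ?f r) \<in> T" by (rule last_in_row_mem[OF cnm r])
    moreover from this have "?f r \<noteq> i" using no_below that unfolding has_below_def by auto
    ultimately show ?thesis using right_of_i[of r] that box by fastforce
  qed
  moreover have inj: "inj_on ?f {i<..n}"
    using inj_on_last_in_row[OF cnm] by (rule inj_on_subset) auto
  ultimately have image: "?f ` {i<..n} = {i<..n}"
    by (intro endo_inj_surj) auto
  obtain a where a: "a < i" "(a, i) \<in> T"
    using \<open>has_above T i i\<close> unfolding has_above_def by blast
  then have a_row: "a \<in> {1..n}" using box by auto
  have "has_below T a i" unfolding has_below_def using a \<open>(i, i) \<in> T\<close> by blast
  then have "has_right T a i" using is_CNM_has_right_iff[OF cnm a(2)] by blast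
  then have "i < ?f a" unfolding has_right_def using le_last_in_row[OF cnm] by fastforce
  moreover have "?f a \<le> n" using last_in_row_mem[OF cnm a_row] box by auto
  ultimately obtain r where "r \<in> {i<..n}" "?f r = ?f a"
    using image by (metis greaterThanAtMost_iff imageE)
  with inj_on_last_in_row[OF cnm] a a_row show False
    by (auto dest: inj_onD)
qed

lemma column_crossing_row:
  assumes na: "non_ambiguous T" and "0 < R" and row: "\<forall>y<i. (R, y) \<notin> T"
    and "(r0, c0) \<in> T" "R < r0" "c0 < i"
  shows "\<exists>c<i. (\<exists>x<R. (x, c) \<in> T) \<and> (\<exists>y>R. (y, c) \<in> T)"
proof -
  let ?P = "\<lambda>q. q \<in> T \<and> R < fst q \<and> snd q < i"
  obtain y c where yc: "(y, c) \<in> T" "R < y" "c < i"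
    and least: "\<And>q. ?P q \<Longrightarrow> y + c \<le> fst q + snd q"
    using ex_has_least_nat[where P = ?P and m = "\<lambda>q. fst q + snd q", of "(r0, c0)"] assms(4-6)
    by fastforce
  have "\<not> has_left T y c"
  proof
    assume "has_left T y c"
    then obtain c' where "c' < c" "(y, c') \<in> T" unfolding has_left_def by blast
    with least[of "(y, c')"] yc show False by auto
  qed
  moreover have "(y, c) \<noteq> (1, 1)" using yc \<open>0 < R\<close> by auto
  ultimately obtain x where x: "x < y" "(x, c) \<in> T"
    using non_ambiguousD[OF na yc(1)] unfolding has_above_def by blast
  have "x \<noteq> R" using row x yc by auto
  moreover have "\<not> R < x" using least[of "(x, c)"] x yc by auto
  ultimately show ?thesis using x yc by (metis linorder_neqE_nat)
qed

section \<open>Moving the parent of a diagonal leaf\<close>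

locale diagonal_leaf =
  fixes n :: nat and T :: "pos set" and i :: nat
  assumes cnm: "is_CNM n T"
    and diagonal: "(i, i) \<in> T" and two_le_i: "2 \<le> i"
    and no_right: "\<not> has_right T i i" and no_below: "\<not> has_below T i i"
    and no_left: "\<not> has_left T i i"
begin

lemma has_above_diagonal: "has_above T i i"
  using non_ambiguousD[OF is_CNM_non_ambiguous[OF cnm] diagonal] two_le_i no_left by auto

definition a :: nat where
  "a = Max {x. x < i \<and> (x, i) \<in> T}"

lemma a_less: "a < i" and a_mem: "(a, i) \<in> T"
  and column_gap: "a < x \<Longrightarrow> x < i \<Longrightarrow> (x, i) \<notin> T"
proof -
  note gap = Max_less_Collect_gap[OF has_above_diagonal[unfolded has_above_def], folded a_def]
  show "a < i" "(a, i) \<in> T" by (fact gap(1), fact gap(2))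
  show "a < x \<Longrightarrow> x < i \<Longrightarrow> (x, i) \<notin> T" by (fact gap(3))
qed

lemma column_below_a: "(x, i) \<in> T \<Longrightarrow> a < x \<Longrightarrow> x = i"
  using column_gap no_below unfolding has_below_def by (meson linorder_neqE_nat)

lemma a_has_below: "has_below T a i"
  using a_less diagonal unfolding has_below_def by blast

lemma a_has_right: "has_right T a i"
  using is_CNM_has_right_iff[OF cnm a_mem] a_has_below by simp

lemma a_ne_root: "(a, i) \<noteq> (1, 1)"
  using two_le_i by auto

text \<open>The vertex \<open>(a, i)\<close> is moved into the row \<open>R\<close>, which has no vertex left of column \<open>i\<close>.\<close>
definition R :: nat where
  "R = (if has_above T a i then a else i)"

lemma row_R: "(R, y) \<in> T \<Longrightarrow> i \<le> y"
proof (cases "has_above T a i")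
  case True
  then have "\<not> has_left T a i"
    using non_ambiguousD[OF is_CNM_non_ambiguous[OF cnm] a_mem a_ne_root] by simp
  with True show "(R, y) \<in> T \<Longrightarrow> i \<le> y"
    unfolding R_def has_left_def by (auto simp: not_less)
next
  case False
  with no_left show "(R, y) \<in> T \<Longrightarrow> i \<le> y"
    unfolding R_def has_left_def by (auto simp: not_less)
qed

lemma R_pos: "0 < R" and R_le: "R \<le> i"
  using a_mem a_less is_CNM_subset[OF cnm] unfolding R_def by auto

lemma crossing_column_exists: "\<exists>c<i. (\<exists>x<R. (x, c) \<in> T) \<and> (\<exists>y>R. (y, c) \<in> T)"
proof -
  obtain r0 c0 where "(r0, c0) \<in> T" "i < r0" "c0 < i"
    using diagonal_leaf_has_vertex_below_left[OF cnm diagonal no_below has_above_diagonal] by blast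
  moreover have "\<forall>y<i. (R, y) \<notin> T" using row_R by (meson not_le)
  ultimately show ?thesis
    using column_crossing_row[OF is_CNM_non_ambiguous[OF cnm] R_pos] R_le by auto
qed

definition c :: nat where
  "c = (SOME c. c < i \<and> (\<exists>x<R. (x, c) \<in> T) \<and> (\<exists>y>R. (y, c) \<in> T))"

lemma c_less: "c < i" and above_c: "\<exists>x<R. (x, c) \<in> T" and below_c: "\<exists>y>R. (y, c) \<in> T"
  using someI_ex[OF crossing_column_exists] unfolding c_def by blast+

definition moved :: "pos set" where
  "moved = insert (R, c) (T - {(a, i)})"

lemma mem_moved: "q \<in> moved \<longleftrightarrow> q = (R, c) \<or> (q \<in> T \<and> q \<noteq> (a, i))"
  unfolding moved_def by blast

lemma new_vertex_not_in_T: "(R, c) \<notin> T"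
  using row_R c_less by fastforce

lemma moved_has_right_iff:
  assumes "(u, v) \<in> T" "(u, v) \<noteq> (a, i)"
  shows "has_right moved u v \<longleftrightarrow> has_right T u v"
proof
  assume "has_right moved u v"
  then obtain y where y: "v < y" "(u, y) \<in> moved" unfolding has_right_def by blast
  have "(u, y) \<noteq> (R, c)"
    using row_R[of v] assms(1) y(1) c_less by auto
  then show "has_right T u v" using y mem_moved unfolding has_right_def by blast
next
  assume "has_right T u v"
  then obtain y where y: "v < y" "(u, y) \<in> T" unfolding has_right_def by blast
  show "has_right moved u v"
  proof (cases "(u, y) = (a, i)")
    case True
    obtain b where "i < b" "(a, b) \<in> T" using a_has_right unfolding has_right_def by blast
    with True y show ?thesis unfolding has_right_def mem_moved
      by (metis less_irrefl order.strict_trans prod.inject)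
  qed (use y in \<open>auto simp: has_right_def mem_moved\<close>)
qed

lemma moved_has_below_iff:
  assumes "(u, v) \<in> T" "(u, v) \<noteq> (a, i)"
  shows "has_below moved u v \<longleftrightarrow> has_below T u v"
proof
  assume "has_below moved u v"
  then obtain x where x: "u < x" "(x, v) \<in> moved" unfolding has_below_def by blast
  show "has_below T u v"
  proof (cases "(x, v) = (R, c)")
    case True
    with x below_c show ?thesis unfolding has_below_def by (metis Pair_inject order.strict_trans)
  qed (use x in \<open>auto simp: has_below_def mem_moved\<close>)
next
  assume "has_below T u v"
  then obtain x where x: "u < x" "(x, v) \<in> T" unfolding has_below_def by blast
  show "has_below moved u v"
  proof (cases "(x, v) = (a, i)")
    case True
    with x a_less diagonal show ?thesis unfolding has_below_def mem_moved
      by (intro exI[of _ i]) auto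
  qed (use x in \<open>auto simp: has_below_def mem_moved\<close>)
qed

lemma moved_has_above_iff:
  assumes "(u, v) \<in> T" "(u, v) \<noteq> (a, i)" "has_above T a i \<or> (u, v) \<noteq> (i, i)"
  shows "has_above moved u v \<longleftrightarrow> has_above T u v"
proof
  assume "has_above moved u v"
  then obtain x where x: "x < u" "(x, v) \<in> moved" unfolding has_above_def by blast
  show "has_above T u v"
  proof (cases "(x, v) = (R, c)")
    case True
    with x above_c show ?thesis unfolding has_above_def by (metis Pair_inject order.strict_trans)
  qed (use x in \<open>auto simp: has_above_def mem_moved\<close>)
next
  assume "has_above T u v"
  then obtain x where x: "x < u" "(x, v) \<in> T" unfolding has_above_def by blast
  show "has_above moved u v"
  proof (cases "(x, v) = (a, i)")
    case True
    then have "(u, v) = (i, i)" using column_below_a assms(1) x by auto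
    then obtain x0 where "x0 < a" "(x0, i) \<in> T"
      using assms(3) unfolding has_above_def by auto
    with True x show ?thesis unfolding has_above_def mem_moved
      by (intro exI[of _ x0]) auto
  qed (use x in \<open>auto simp: has_above_def mem_moved\<close>)
qed

lemma moved_has_left_iff:
  assumes "(u, v) \<in> T" "(u, v) \<noteq> (a, i)" "has_above T a i \<or> (u, v) \<noteq> (i, i)"
  shows "has_left moved u v \<longleftrightarrow> has_left T u v"
proof
  assume "has_left moved u v"
  then obtain y where y: "y < v" "(u, y) \<in> moved" unfolding has_left_def by blast
  show "has_left T u v"
  proof (cases "(u, y) = (R, c)")
    case True
    then have "i \<le> v" using row_R assms(1) by auto
    moreover have "v \<noteq> i" using True assms unfolding R_def by (auto split: if_splits)
    ultimately have "i < v" by simp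
    show ?thesis
    proof (cases "has_above T a i")
      case True
      with \<open>(u, y) = (R, c)\<close> \<open>i < v\<close> a_mem show ?thesis unfolding R_def has_left_def by auto
    next
      case False
      with \<open>(u, y) = (R, c)\<close> \<open>i < v\<close> assms(1) no_right show ?thesis
        unfolding R_def has_right_def by auto
    qed
  qed (use y in \<open>auto simp: has_left_def mem_moved\<close>)
next
  assume "has_left T u v"
  then obtain y where y: "y < v" "(u, y) \<in> T" unfolding has_left_def by blast
  show "has_left moved u v"
  proof (cases "(u, y) = (a, i)")
    case True
    show ?thesis
    proof (cases "has_above T a i")
      case True
      with \<open>(u, y) = (a, i)\<close> y c_less show ?thesis unfolding R_def has_left_def mem_moved
        by (intro exI[of _ c]) auto
    next
      case False
      then obtain l where "l < i" "(a, l) \<in> T"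
        using non_ambiguousD[OF is_CNM_non_ambiguous[OF cnm] a_mem a_ne_root]
        unfolding has_left_def by auto
      with \<open>(u, y) = (a, i)\<close> y show ?thesis unfolding has_left_def mem_moved
        by (intro exI[of _ l]) auto
    qed
  qed (use y in \<open>auto simp: has_left_def mem_moved\<close>)
qed

lemma new_vertex_has_above: "has_above moved R c"
  and new_vertex_not_has_left: "\<not> has_left moved R c"
  and new_vertex_has_below: "has_below moved R c"
  and new_vertex_has_right: "has_right moved R c"
proof -
  show "has_above moved R c" using above_c c_less unfolding has_above_def mem_moved by auto
  show "has_below moved R c" using below_c c_less unfolding has_below_def mem_moved by auto
  show "\<not> has_left moved R c" using row_R c_less unfolding has_left_def mem_moved by fastforce
  obtain b where "i < b" "(a, b) \<in> T" using a_has_right unfolding has_right_def by blast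
  then have "(a, b) \<in> moved" "c < b" using c_less unfolding mem_moved by auto
  moreover have "(i, i) \<in> moved" using diagonal a_less unfolding mem_moved by auto
  ultimately show "has_right moved R c"
    using c_less unfolding R_def has_right_def by auto
qed

lemma diagonal_in_moved:
  assumes "\<not> has_above T a i"
  shows "\<not> has_above moved i i" and "has_left moved i i"
proof -
  show "\<not> has_above moved i i"
  proof
    assume "has_above moved i i"
    then obtain x where x: "x < i" "(x, i) \<in> T" "x \<noteq> a"
      using c_less unfolding has_above_def mem_moved by auto
    then have "a < x" using assms unfolding has_above_def by (meson linorder_neqE_nat)
    with x column_gap show False by blast
  qed
  show "has_left moved i i" using assms c_less unfolding R_def has_left_def mem_moved by auto
qed

lemma is_CNM_moved: "is_CNM n moved"
  unfolding is_CNM_iff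
proof (intro conjI)
  have box: "T \<subseteq> {1..n} \<times> {1..n}" by (rule is_CNM_subset[OF cnm])
  have "R \<in> {1..n}" "c \<in> {1..n}"
    using R_pos R_le diagonal above_c box by auto
  with box show "moved \<subseteq> {1..n} \<times> {1..n}" unfolding moved_def by auto
  show "(1, 1) \<in> moved" using is_CNM_root[OF cnm] a_ne_root unfolding mem_moved by auto
  show "non_ambiguous moved"
    unfolding non_ambiguous_def Ball_def split_paired_All prod.case
  proof (intro allI impI)
    fix u v assume uv: "(u, v) \<in> moved" "(u, v) \<noteq> (1, 1)"
    show "has_above moved u v \<noteq> has_left moved u v"
    proof (cases "(u, v) = (R, c)")
      case True
      then show ?thesis using new_vertex_has_above new_vertex_not_has_left by simp
    next
      case False
      then have uvT: "(u, v) \<in> T" "(u, v) \<noteq> (a, i)" using uv unfolding mem_moved by auto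
      show ?thesis
      proof (cases "has_above T a i \<or> (u, v) \<noteq> (i, i)")
        case True
        then show ?thesis
          using moved_has_above_iff[OF uvT True] moved_has_left_iff[OF uvT True]
            non_ambiguousD[OF is_CNM_non_ambiguous[OF cnm] uvT(1) uv(2)] by simp
      next
        case False
        then show ?thesis using diagonal_in_moved by auto
      qed
    qed
  qed
  show "\<forall>u\<in>{1..n}. \<exists>v. (u, v) \<in> moved"
  proof
    fix u assume "u \<in> {1..n}"
    then obtain v where "(u, v) \<in> T" using is_CNM_rows[OF cnm] by blast
    moreover obtain b where "i < b" "(a, b) \<in> T" using a_has_right unfolding has_right_def by blast
    ultimately show "\<exists>v. (u, v) \<in> moved" unfolding mem_moved by (metis less_irrefl prod.inject)
  qed
  show "\<forall>v\<in>{1..n}. \<exists>u. (u, v) \<in> moved"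
  proof
    fix v assume "v \<in> {1..n}"
    then obtain u where "(u, v) \<in> T" using is_CNM_cols[OF cnm] by blast
    then show "\<exists>u. (u, v) \<in> moved"
      using diagonal a_less unfolding mem_moved by (metis less_irrefl prod.inject)
  qed
  show "\<forall>(u, v) \<in> moved. has_right moved u v \<longleftrightarrow> has_below moved u v"
    unfolding Ball_def split_paired_All prod.case
  proof (intro allI impI)
    fix u v assume uv: "(u, v) \<in> moved"
    show "has_right moved u v \<longleftrightarrow> has_below moved u v"
    proof (cases "(u, v) = (R, c)")
      case True
      then show ?thesis using new_vertex_has_right new_vertex_has_below by simp
    next
      case False
      then have uvT: "(u, v) \<in> T" "(u, v) \<noteq> (a, i)" using uv unfolding mem_moved by auto
      then show ?thesis
        using moved_has_right_iff moved_has_below_iff is_CNM_has_right_iff[OF cnm] by simp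
    qed
  qed
qed

lemma leaf_matrix_moved: "leaf_matrix moved = leaf_matrix T"
proof -
  have "(u, v) \<in> moved \<and> \<not> has_right moved u v \<and> \<not> has_below moved u v \<longleftrightarrow>
      (u, v) \<in> T \<and> \<not> has_right T u v \<and> \<not> has_below T u v" for u v
  proof (cases "(u, v) \<in> T \<and> (u, v) \<noteq> (a, i)")
    case True
    then have "(u, v) \<in> moved" unfolding mem_moved by simp
    then show ?thesis using True moved_has_right_iff[of u v] moved_has_below_iff[of u v] by blast
  next
    case False
    then have "(u, v) \<in> moved \<longleftrightarrow> (u, v) = (R, c)" "(u, v) \<in> T \<longleftrightarrow> (u, v) = (a, i)"
      using a_mem unfolding mem_moved by blast+
    then show ?thesis using new_vertex_has_right a_has_below by auto
  qed
  then show ?thesis unfolding leaf_matrix_eq[OF cnm] leaf_matrix_eq[OF is_CNM_moved] by auto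
qed

lemma moved_ne: "moved \<noteq> T"
  using new_vertex_not_in_T unfolding moved_def by blast

end

lemma diagonal_leaf_not_unique:
  assumes cnm: "is_CNM n T" and "2 \<le> n" and leaf: "(i, i) \<in> leaf_matrix T"
  shows "\<exists>T'. is_CNM n T' \<and> leaf_matrix T' = leaf_matrix T \<and> T' \<noteq> T"
proof -
  have diag: "(i, i) \<in> T" "\<not> has_right T i i" "\<not> has_below T i i"
    using leaf unfolding leaf_matrix_eq[OF cnm] by auto
  have "i \<noteq> 1" using root_not_leaf[OF cnm \<open>2 \<le> n\<close>] leaf by auto
  moreover have "i \<noteq> 0" using diag is_CNM_subset[OF cnm] by auto
  ultimately have "2 \<le> i" by simp
  show ?thesis
  proof (cases "has_left T i i")
    case False
    then interpret T: diagonal_leaf n T i using cnm diag \<open>2 \<le> i\<close> by unfold_locales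
    show ?thesis using T.is_CNM_moved T.leaf_matrix_moved T.moved_ne by blast
  next
    case True
    text \<open>Transposing turns the left neighbour of \<open>(i, i)\<close> into a vertex above it.\<close>
    let ?S = "prod.swap ` T"
    have "\<not> has_above T i i"
      using True non_ambiguousD[OF is_CNM_non_ambiguous[OF cnm] diag(1)] \<open>2 \<le> i\<close> by auto
    then interpret S: diagonal_leaf n ?S i
      using is_CNM_swap[OF cnm] diag \<open>2 \<le> i\<close> by unfold_locales auto
    have "is_CNM n (prod.swap ` S.moved)" by (rule is_CNM_swap[OF S.is_CNM_moved])
    moreover have "leaf_matrix (prod.swap ` S.moved) = leaf_matrix T"
      unfolding leaf_matrix_swap[OF S.is_CNM_moved] S.leaf_matrix_moved leaf_matrix_swap[OF cnm]
      by (simp only: image_comp swap_comp_swap image_id id_apply)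
    moreover have "prod.swap ` S.moved \<noteq> T"
    proof
      assume "prod.swap ` S.moved = T"
      then have "prod.swap ` prod.swap ` S.moved = prod.swap ` T" by (rule arg_cong)
      then show False using S.moved_ne by (simp only: image_comp swap_comp_swap image_id id_apply)
    qed
    ultimately show ?thesis by blast
  qed
qed

theorem lemma3p2:
  fixes n :: nat and P :: "pos set"
  assumes "n \<ge> 2"
    and "is_perm_matrix n P"
    and "\<exists>!M. is_CNM n M \<and> leaf_matrix M = P"
  shows "\<forall>i \<in> {1..n}. (i, i) \<notin> P"
proof (intro ballI notI)
  fix i assume "(i, i) \<in> P"
  obtain M where M: "is_CNM n M" "leaf_matrix M = P"
    and unique: "\<And>M'. is_CNM n M' \<and> leaf_matrix M' = P \<Longrightarrow> M' = M"
    using assms(3) by blast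
  obtain M' where "is_CNM n M'" "leaf_matrix M' = leaf_matrix M" "M' \<noteq> M"
    using diagonal_leaf_not_unique[OF M(1) assms(1)] \<open>(i, i) \<in> P\<close> M(2) by blast
  with M unique show False by blast
qed

end
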